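(* Let $r>0$, $\tau>0$, $p\in(0,1)$ be fixed with $\varepsilon=pe^{-\tau}$, let $\kappa=0$, and let $q_c=1-\frac{1}{r}\frac{1}{1-\varepsilon}$. For $q\in\mathbb{R}$ let $w(q)=(1-q_c,\,q_c-q,\,q)$, so that $\widehat{w(q)}$ is an equilibrium of the SIQ system, whose eigenvalues are the roots (with multiplicity) of \[ \chi_q(\lambda)=\lambda\Big(\lambda+1-r\big(1-q-2(q_c-q)\big)\big(1-\varepsilon e^{-\tau\lambda}\big)\Big). \] If $q\le q_c$, then $\widehat{w(q)}$ is linearly stable; otherwise it is linearly unstable. Specifically, for $q<q_c$ the eigenvalue $\lambda=0$ has multiplicity $1$ and all other eigenvalues satisfy $\mathrm{Re}(\lambda)<0$, and one eigenvalue crosses the imaginary axis as $q$ increases past $q_c$.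
   Context: The SIQ system (here with $\kappa=0$) is \[ \dot S(t)=-rS(t)I(t)+I(t)+r\varepsilon S(t-\tau-\kappa)I(t-\tau-\kappa),\quad \dot I(t)=rS(t)I(t)-I(t)-r\varepsilon S(t-\tau)I(t-\tau), \] \[ \dot Q(t)=r\varepsilon\big[S(t-\tau)I(t-\tau)-S(t-\tau-\kappa)I(t-\tau-\kappa)\big], \] on continuous histories with $S+I+Q\equiv1$; $\hat u$ is the constant function with value $u$. $\chi_q$ is the characteristic function of the linearization at $\widehat{w(q)}$. The equilibrium (lying on a line of equilibria) is linearly stable if all eigenvalues other than $\lambda=0$ have negative real part and linearly unstable if some eigenvalue has positive real part. *)

theory Defs
  imports "HOL-Complex_Analysis.Complex_Analysis"
begin

definition siq_eps :: "real \<Rightarrow> real \<Rightarrow> real" where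
  "siq_eps tau p = p * exp (- tau)"

definition siq_qc :: "real \<Rightarrow> real \<Rightarrow> real \<Rightarrow> real" where
  "siq_qc r tau p = 1 - (1 / r) * (1 / (1 - siq_eps tau p))"

definition siq_chi :: "real \<Rightarrow> real \<Rightarrow> real \<Rightarrow> real \<Rightarrow> complex \<Rightarrow> complex" where
  "siq_chi r tau p q z =
     z * (z + 1 - complex_of_real (r * (1 - q - 2 * (siq_qc r tau p - q)))
              * (1 - complex_of_real (siq_eps tau p) * exp (- complex_of_real tau * z)))"

text \<open>Equilibrium on a line of equilibria: linearly stable iff every eigenvalue other
  than 0 has negative real part; linearly unstable iff some eigenvalue has positive real part.\<close>
definition siq_lin_stable :: "real \<Rightarrow> real \<Rightarrow> real \<Rightarrow> real \<Rightarrow> bool" where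
  "siq_lin_stable r tau p q \<longleftrightarrow>
     (\<forall>z. siq_chi r tau p q z = 0 \<and> z \<noteq> 0 \<longrightarrow> Re z < 0)"

definition siq_lin_unstable :: "real \<Rightarrow> real \<Rightarrow> real \<Rightarrow> real \<Rightarrow> bool" where
  "siq_lin_unstable r tau p q \<longleftrightarrow>
     (\<exists>z. siq_chi r tau p q z = 0 \<and> Re z > 0)"

end

theory Submission
  imports Defs
begin

(* chi_q(z) = z h(z) with h(z) = z + 1 - c (1 - eps e^(-tau z)), where the gain
   c = r (1 - q - 2 (q_c - q)) = 1/(1 - eps) + r (q - q_c) increases with q and equals
   1/(1 - eps) at q = q_c; everything hinges on eps (1 + tau) < 1, i.e. p (1 + tau) < e^tau.
   If 0 < c <= 1/(1 - eps) then c eps tau < 1, so by |sin t| <= |t| the imaginary part of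
   h(z) = 0 forces Im z = 0 whenever Re z >= 0, and e^(-x) >= 1 - x excludes real roots x > 0;
   if c <= 0 the real part of h(z) is positive for Re z >= 0.
   If c > 1/(1 - eps) then h(0) < 0 < h(c) gives a positive real root.
   A real x is a root of h exactly for the gain (x + 1)/(1 - eps e^(-tau x)), whose derivative
   at 0 is positive because eps (1 + tau) < 1; inverting it near 0 gives the root mu(q),
   which changes sign at q_c. *)

definition delay_factor :: "real \<Rightarrow> real \<Rightarrow> real \<Rightarrow> complex \<Rightarrow> complex" where
  "delay_factor c e tau z = z + 1 - of_real c * (1 - of_real e * exp (- of_real tau * z))"

lemma Re_delay_factor:
  "Re (delay_factor c e tau z) = Re z + 1 - c + c * e * exp (- tau * Re z) * cos (tau * Im z)"
  by (simp add: delay_factor_def Re_exp algebra_simps)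

lemma Im_delay_factor:
  "Im (delay_factor c e tau z) = Im z - c * e * exp (- tau * Re z) * sin (tau * Im z)"
  by (simp add: delay_factor_def Im_exp algebra_simps)

lemma delay_factor_of_real:
  "delay_factor c e tau (of_real x) = of_real (x + 1 - c + c * e * exp (- tau * x))"
  by (simp add: complex_eq_iff Re_delay_factor Im_delay_factor)

lemma delay_factor_root_real:
  fixes c e tau :: real
  assumes ce: "0 \<le> c * e" and tau: "0 \<le> tau" and small_gain: "c * e * tau < 1"
    and "0 \<le> Re z" and root: "delay_factor c e tau z = 0"
  shows "Im z = 0"
proof (rule ccontr)
  define y E where "y = Im z" and "E = exp (- tau * Re z)"
  assume "Im z \<noteq> 0"
  then have "y \<noteq> 0" by (simp add: y_def)
  have E: "0 < E" "E \<le> 1" using \<open>0 \<le> Re z\<close> tau by (auto simp: E_def)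
  have im: "y = c * e * E * sin (tau * y)"
    using root Im_delay_factor[of c e tau z] by (simp add: y_def E_def)
  have "\<bar>y\<bar> \<le> c * e * E * \<bar>tau * y\<bar>"
    using im ce E abs_sin_x_le_abs_x[of "tau * y"]
    by (metis abs_mult abs_of_nonneg mult_left_mono mult_nonneg_nonneg order_less_imp_le)
  also have "\<dots> = (c * e * tau * \<bar>y\<bar>) * E" using tau by (simp add: abs_mult mult_ac)
  also have "\<dots> \<le> c * e * tau * \<bar>y\<bar>"
    using E mult_nonneg_nonneg[OF mult_nonneg_nonneg[OF ce tau] abs_ge_zero[of y]]
    by (intro mult_left_le) auto
  also have "\<dots> < \<bar>y\<bar>" using small_gain \<open>y \<noteq> 0\<close> by simp
  finally show False by simp
qed

lemma delay_factor_root_Re_neg: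
  fixes c e tau :: real
  assumes e: "0 \<le> e" "e * (1 + tau) < 1" and tau: "0 \<le> tau" and c: "c \<le> 1 / (1 - e)"
    and root: "delay_factor c e tau z = 0" and "z \<noteq> 0"
  shows "Re z < 0"
proof (rule ccontr)
  assume "\<not> Re z < 0"
  then have x: "0 \<le> Re z" by simp
  define x y E where "x = Re z" and "y = Im z" and "E = exp (- tau * x)"
  have E: "0 < E" "E \<le> 1" using x tau by (auto simp: E_def x_def)
  have re: "x + 1 - c + c * e * E * cos (tau * y) = 0"
    using root Re_delay_factor[of c e tau z] by (simp add: x_def y_def E_def)
  have "e * 1 \<le> e * (1 + tau)" using e tau by (intro mult_left_mono) auto
  then have e1: "e < 1" using e by simp
  show False
  proof (cases "c \<le> 0")
    case True
    have "E * \<bar>cos (tau * y)\<bar> \<le> 1" using E abs_cos_le_one by (intro mult_le_one) auto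
    then have "(- c * e) * (E * \<bar>cos (tau * y)\<bar>) \<le> - c * e"
      using True e by (intro mult_left_le) (auto simp: mult_nonpos_nonneg)
    moreover have "\<bar>c * e * E * cos (tau * y)\<bar> = (- c * e) * (E * \<bar>cos (tau * y)\<bar>)"
      using True e E by (simp add: abs_mult)
    ultimately have "\<bar>c * e * E * cos (tau * y)\<bar> \<le> - c * e" by simp
    moreover have "- c * e \<le> - c" using mult_left_mono_neg[of e 1 c] True e1 by simp
    ultimately show False using re x x_def by linarith
  next
    case False
    have "c * e * tau \<le> e * tau / (1 - e)"
      using mult_right_mono[OF c, of "e * tau"] e tau by simp
    also have "\<dots> < 1" using e e1 by (simp add: field_simps)
    finally have small_gain: "c * e * tau < 1" .
    have ce: "0 \<le> c * e" using False e by simp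
    have "y = 0" using delay_factor_root_real[OF ce tau small_gain x root] by (simp add: y_def)
    then have "0 < x" using x \<open>z \<noteq> 0\<close> by (auto simp: x_def y_def complex_eq_iff)
    have "1 - tau * x \<le> E" using exp_ge_add_one_self[of "- tau * x"] by (simp add: E_def)
    then have "c * e * (1 - tau * x) \<le> c * e * E" using ce by (rule mult_left_mono)
    moreover have "c * (1 - e) \<le> 1" using c e1 by (simp add: field_simps)
    moreover have "0 < x * (1 - c * e * tau)" using \<open>0 < x\<close> small_gain by simp
    ultimately show False using re \<open>y = 0\<close> by (simp add: algebra_simps)
  qed
qed

lemma delay_factor_pos_real_root:
  fixes c e tau :: real
  assumes "0 \<le> e" "e < 1" and "1 / (1 - e) < c"
  obtains x where "0 < x" "delay_factor c e tau (of_real x) = 0"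
proof -
  define g where "g x = x + 1 - c + c * e * exp (- tau * x)" for x
  have "0 < 1 / (1 - e)" using assms(2) by simp
  then have "0 < c" using assms(3) by linarith
  have "g 0 < 0" using assms by (simp add: g_def field_simps)
  moreover have "0 < g c" using \<open>0 < c\<close> assms by (simp add: g_def add_pos_nonneg)
  moreover have "continuous_on {0..c} g" unfolding g_def by (intro continuous_intros)
  ultimately obtain x where "0 \<le> x" "x \<le> c" "g x = 0"
    using IVT'[of g 0 0 c] \<open>0 < c\<close> by auto
  with \<open>g 0 < 0\<close> have "0 < x" by (cases "x = 0") auto
  moreover have "delay_factor c e tau (of_real x) = of_real (g x)"
    by (simp only: delay_factor_of_real g_def)
  ultimately show thesis using \<open>g x = 0\<close> by (intro that) auto
qed

lemma zorder_times_delay_factor: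
  assumes "c * (1 - e) \<noteq> 1"
  shows "zorder (\<lambda>z. z * delay_factor c e tau z) 0 = 1"
proof (rule zorder_eqI[where S = UNIV and g = "delay_factor c e tau"])
  show "delay_factor c e tau holomorphic_on UNIV"
    unfolding delay_factor_def by (intro holomorphic_intros)
  have "delay_factor c e tau 0 = of_real (1 - c * (1 - e))"
    using delay_factor_of_real[of c e tau 0] by (simp add: algebra_simps)
  moreover have "1 - c * (1 - e) \<noteq> 0" using assms by simp
  ultimately show "delay_factor c e tau 0 \<noteq> 0" by (metis of_real_eq_0_iff)
qed auto

lemma strict_mono_on_local_inverse:
  fixes f :: "real \<Rightarrow> real"
  assumes cont: "continuous_on {a..b} f" and mono: "strict_mono_on {a..b} f"
    and "a < x0" "x0 < b"
  obtains \<eta> g where "0 < \<eta>" "continuous_on {f x0 - \<eta> <..< f x0 + \<eta>} g" "g (f x0) = x0"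
    "\<And>y. \<bar>y - f x0\<bar> < \<eta> \<Longrightarrow> g y \<in> {a..b} \<and> f (g y) = y"
proof -
  define g where "g = inv_into {a..b} f"
  define \<eta> where "\<eta> = min (f x0 - f a) (f b - f x0)"
  have inj: "inj_on f {a..b}" using mono by (rule strict_mono_on_imp_inj_on)
  have x0: "x0 \<in> {a..b}" using assms by simp
  have "0 < \<eta>" using assms by (simp add: \<eta>_def strict_mono_onD)
  have range: "y \<in> f ` {a..b}" if "\<bar>y - f x0\<bar> < \<eta>" for y
  proof -
    have "f a \<le> y" "y \<le> f b" using that by (auto simp: \<eta>_def)
    then obtain x where "a \<le> x" "x \<le> b" "f x = y"
      using IVT'[of f a y b, OF _ _ _ cont] assms(3,4) by auto
    then show ?thesis by auto
  qed
  have "continuous_on (f ` {a..b}) g"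
    unfolding g_def using inj by (intro continuous_on_inv[OF cont compact_Icc]) auto
  then have "continuous_on {f x0 - \<eta> <..< f x0 + \<eta>} g"
    by (rule continuous_on_subset) (auto intro: range simp: abs_less_iff)
  moreover have "g (f x0) = x0" using inj x0 by (simp add: g_def inv_into_f_f)
  moreover have "g y \<in> {a..b} \<and> f (g y) = y" if "\<bar>y - f x0\<bar> < \<eta>" for y
    unfolding g_def using inv_into_into[OF range[OF that]] f_inv_into_f[OF range[OF that]] by blast
  ultimately show thesis using \<open>0 < \<eta>\<close> by (intro that)
qed

lemma continuous_on_affine_comp_interval:
  fixes \<rho> :: "real \<Rightarrow> 'a::topological_space"
  assumes "continuous_on {c0 - \<eta> <..< c0 + \<eta>} \<rho>" and "0 < r"
  shows "continuous_on {q0 - \<eta> / r <..< q0 + \<eta> / r} (\<lambda>q. \<rho> (c0 + r * (q - q0)))"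
proof (rule continuous_on_compose2[OF assms(1)])
  show "continuous_on {q0 - \<eta> / r <..< q0 + \<eta> / r} (\<lambda>q. c0 + r * (q - q0))"
    by (intro continuous_intros)
  show "(\<lambda>q. c0 + r * (q - q0)) ` {q0 - \<eta> / r <..< q0 + \<eta> / r} \<subseteq> {c0 - \<eta> <..< c0 + \<eta>}"
    using assms(2) by (auto simp: field_simps)
qed

definition delay_root_gain :: "real \<Rightarrow> real \<Rightarrow> real \<Rightarrow> real" where
  "delay_root_gain e tau x = (x + 1) / (1 - e * exp (- tau * x))"

lemma delay_factor_of_real_eq_0_iff:
  assumes "e * exp (- tau * x) \<noteq> 1"
  shows "delay_factor c e tau (of_real x) = 0 \<longleftrightarrow> c = delay_root_gain e tau x"
proof -
  have "1 - e * exp (- tau * x) \<noteq> 0" using assms by simp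
  then have "x + 1 - c + c * e * exp (- tau * x) = 0 \<longleftrightarrow> c = delay_root_gain e tau x"
    by (auto simp: delay_root_gain_def field_simps)
  then show ?thesis by (simp only: delay_factor_of_real of_real_eq_0_iff)
qed

lemma delay_root_gain_strict_mono_near_0:
  fixes e tau :: real
  assumes e: "0 \<le> e" "e * (1 + tau) < 1" and tau: "0 \<le> tau"
  obtains d where "0 < d" "strict_mono_on {-d..d} (delay_root_gain e tau)"
    "continuous_on {-d..d} (delay_root_gain e tau)" "\<And>x. x \<in> {-d..d} \<Longrightarrow> e * exp (- tau * x) < 1"
proof -
  define \<psi> where "\<psi> x = e * exp (- tau * x) * (1 + tau * (x + 1))" for x
  have "isCont \<psi> 0" unfolding \<psi>_def by (intro continuous_intros)
  moreover have "\<psi> 0 < 1" using e by (simp add: \<psi>_def)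
  ultimately have "eventually (\<lambda>x. \<psi> x < 1) (nhds 0)"
    unfolding isCont_def tendsto_at_iff_tendsto_nhds by (rule order_tendstoD(2))
  then obtain d0 where "0 < d0" and d0: "\<And>x. \<bar>x\<bar> \<le> d0 \<Longrightarrow> \<psi> x < 1"
    unfolding eventually_nhds_metric_le dist_real_def by auto
  define d where "d = min d0 1"
  have "0 < d" using \<open>0 < d0\<close> by (simp add: d_def)
  have \<psi>: "\<psi> x < 1" and den: "e * exp (- tau * x) < 1" if "x \<in> {-d..d}" for x
  proof -
    show "\<psi> x < 1" using that d0[of x] by (auto simp: d_def abs_le_iff)
    moreover have "e * exp (- tau * x) * 1 \<le> \<psi> x"
      unfolding \<psi>_def using that e tau by (intro mult_left_mono) (auto simp: d_def)
    ultimately show "e * exp (- tau * x) < 1" by simp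
  qed
  have deriv: "(delay_root_gain e tau has_real_derivative
      (1 - \<psi> x) / (1 - e * exp (- tau * x))\<^sup>2) (at x)" if "x \<in> {-d..d}" for x
    unfolding delay_root_gain_def[abs_def] \<psi>_def using den[OF that]
    by (auto intro!: derivative_eq_intros simp: power2_eq_square algebra_simps)
  have "strict_mono_on {-d..d} (delay_root_gain e tau)"
  proof (rule strict_mono_onI)
    fix a b assume ab: "a \<in> {-d..d}" "b \<in> {-d..d}" "a < b"
    show "delay_root_gain e tau a < delay_root_gain e tau b"
    proof (rule DERIV_pos_imp_increasing[OF \<open>a < b\<close>])
      fix x assume "a \<le> x" "x \<le> b"
      then have x: "x \<in> {-d..d}" using ab by auto
      have "0 < (1 - \<psi> x) / (1 - e * exp (- tau * x))\<^sup>2" using \<psi>[OF x] den[OF x] by simp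
      then show "\<exists>y. (delay_root_gain e tau has_real_derivative y) (at x) \<and> 0 < y"
        using deriv[OF x] by blast
    qed
  qed
  moreover have "continuous_on {-d..d} (delay_root_gain e tau)"
    using deriv by (intro DERIV_atLeastAtMost_imp_continuous_on) auto
  ultimately show thesis using that \<open>0 < d\<close> den by blast
qed

lemma delay_factor_real_root_branch:
  fixes e tau :: real
  assumes e: "0 \<le> e" "e * (1 + tau) < 1" and tau: "0 \<le> tau"
  obtains \<eta> \<rho> where "0 < \<eta>" "continuous_on {1 / (1 - e) - \<eta> <..< 1 / (1 - e) + \<eta>} \<rho>"
    "\<rho> (1 / (1 - e)) = 0"
    "\<And>c. \<bar>c - 1 / (1 - e)\<bar> < \<eta> \<Longrightarrow> delay_factor c e tau (of_real (\<rho> c)) = 0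
        \<and> (\<rho> c < 0 \<longleftrightarrow> c < 1 / (1 - e)) \<and> (0 < \<rho> c \<longleftrightarrow> 1 / (1 - e) < c)"
proof -
  let ?\<phi> = "delay_root_gain e tau"
  obtain d where "0 < d" and mono: "strict_mono_on {-d..d} ?\<phi>" and "continuous_on {-d..d} ?\<phi>"
    and den: "\<And>x. x \<in> {-d..d} \<Longrightarrow> e * exp (- tau * x) < 1"
    using delay_root_gain_strict_mono_near_0[OF e tau] by blast
  then obtain \<eta> \<rho> where "0 < \<eta>" and cont: "continuous_on {?\<phi> 0 - \<eta> <..< ?\<phi> 0 + \<eta>} \<rho>"
    and "\<rho> (?\<phi> 0) = 0" and \<rho>: "\<And>c. \<bar>c - ?\<phi> 0\<bar> < \<eta> \<Longrightarrow> \<rho> c \<in> {-d..d} \<and> ?\<phi> (\<rho> c) = c"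
    using strict_mono_on_local_inverse[of "-d" d ?\<phi> 0] by auto
  have "0 \<in> {-d..d}" using \<open>0 < d\<close> by simp
  have root_sign: "delay_factor c e tau (of_real (\<rho> c)) = 0
      \<and> (\<rho> c < 0 \<longleftrightarrow> c < ?\<phi> 0) \<and> (0 < \<rho> c \<longleftrightarrow> ?\<phi> 0 < c)" if "\<bar>c - ?\<phi> 0\<bar> < \<eta>" for c
  proof (intro conjI)
    have \<rho>c: "\<rho> c \<in> {-d..d}" "?\<phi> (\<rho> c) = c" using \<rho>[OF that] by auto
    show "delay_factor c e tau (of_real (\<rho> c)) = 0"
      using delay_factor_of_real_eq_0_iff[of e tau "\<rho> c" c] den[OF \<rho>c(1)] \<rho>c(2) by simp
    show "\<rho> c < 0 \<longleftrightarrow> c < ?\<phi> 0"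
      using strict_mono_on_less[OF mono \<rho>c(1) \<open>0 \<in> {-d..d}\<close>] \<rho>c(2) by simp
    show "0 < \<rho> c \<longleftrightarrow> ?\<phi> 0 < c"
      using strict_mono_on_less[OF mono \<open>0 \<in> {-d..d}\<close> \<rho>c(1)] \<rho>c(2) by simp
  qed
  have "?\<phi> 0 = 1 / (1 - e)" by (simp add: delay_root_gain_def)
  then show thesis
    using that[of \<eta> \<rho>] \<open>0 < \<eta>\<close> cont \<open>\<rho> (?\<phi> 0) = 0\<close> root_sign by simp
qed

definition siq_gain :: "real \<Rightarrow> real \<Rightarrow> real \<Rightarrow> real \<Rightarrow> real" where
  "siq_gain r tau p q = r * (1 - q - 2 * (siq_qc r tau p - q))"

lemma siq_chi_eq: "siq_chi r tau p q = (\<lambda>z. z * delay_factor (siq_gain r tau p q) (siq_eps tau p) tau z)"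
  by (rule ext) (simp only: siq_chi_def siq_gain_def delay_factor_def)

lemma siq_gain_eq:
  assumes "r \<noteq> 0"
  shows "siq_gain r tau p q = 1 / (1 - siq_eps tau p) + r * (q - siq_qc r tau p)"
proof -
  have "r * (1 - siq_qc r tau p) = 1 / (1 - siq_eps tau p)"
    using assms by (simp add: siq_qc_def)
  then show ?thesis by (simp add: siq_gain_def algebra_simps)
qed

lemma siq_gain_critical_iff:
  assumes "0 < r"
  shows "siq_gain r tau p q < 1 / (1 - siq_eps tau p) \<longleftrightarrow> q < siq_qc r tau p"
    and "siq_gain r tau p q \<le> 1 / (1 - siq_eps tau p) \<longleftrightarrow> q \<le> siq_qc r tau p"
    and "1 / (1 - siq_eps tau p) < siq_gain r tau p q \<longleftrightarrow> siq_qc r tau p < q"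
  using assms by (simp_all add: siq_gain_eq mult_less_0_iff mult_le_0_iff zero_less_mult_iff)

lemma siq_eps_bounds:
  assumes "0 \<le> p" "p \<le> 1" "0 < tau"
  shows "0 \<le> siq_eps tau p" and "siq_eps tau p * (1 + tau) < 1" and "siq_eps tau p < 1"
proof -
  show "0 \<le> siq_eps tau p" using assms(1) by (simp add: siq_eps_def)
  have "siq_eps tau p * (1 + tau) = p * (exp (- tau) * (1 + tau))" by (simp add: siq_eps_def)
  also have "\<dots> \<le> exp (- tau) * (1 + tau)"
    using assms by (intro mult_left_le_one_le) auto
  also have "\<dots> < 1"
    using exp_minus_greater[of "- tau"] assms(3) by (simp add: exp_minus field_simps)
  finally show "siq_eps tau p * (1 + tau) < 1" .
  moreover have "siq_eps tau p * 1 \<le> siq_eps tau p * (1 + tau)"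
    using \<open>0 \<le> siq_eps tau p\<close> assms(3) by (intro mult_left_mono) auto
  ultimately show "siq_eps tau p < 1" by simp
qed

context
  fixes r tau p :: real
  assumes r: "0 < r" and tau: "0 < tau" and p: "0 \<le> p" "p \<le> 1"
begin

lemma siq_lin_stable_if_le_qc:
  assumes "q \<le> siq_qc r tau p"
  shows "siq_lin_stable r tau p q"
  unfolding siq_lin_stable_def siq_chi_eq
proof (intro allI impI)
  fix z assume "z * delay_factor (siq_gain r tau p q) (siq_eps tau p) tau z = 0 \<and> z \<noteq> 0"
  then have "delay_factor (siq_gain r tau p q) (siq_eps tau p) tau z = 0" "z \<noteq> 0" by auto
  then show "Re z < 0"
    by (rule delay_factor_root_Re_neg[OF siq_eps_bounds(1,2)[OF p tau] less_imp_le[OF tau]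
          siq_gain_critical_iff(2)[OF r, THEN iffD2, OF assms]])
qed

lemma siq_lin_unstable_if_gt_qc:
  assumes "siq_qc r tau p < q"
  shows "siq_lin_unstable r tau p q"
proof -
  obtain x where "0 < x" "delay_factor (siq_gain r tau p q) (siq_eps tau p) tau (of_real x) = 0"
    using delay_factor_pos_real_root[OF siq_eps_bounds(1,3)[OF p tau]
        siq_gain_critical_iff(3)[OF r, THEN iffD2, OF assms]] by blast
  then have "siq_chi r tau p q (of_real x) = 0 \<and> 0 < Re (of_real x)" by (simp add: siq_chi_eq)
  then show ?thesis unfolding siq_lin_unstable_def by blast
qed

lemma zorder_siq_chi_if_lt_qc:
  assumes "q < siq_qc r tau p"
  shows "zorder (siq_chi r tau p q) 0 = 1"
proof -
  have "siq_gain r tau p q * (1 - siq_eps tau p) < 1"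
    using siq_gain_critical_iff(1)[OF r, THEN iffD2, OF assms] siq_eps_bounds(3)[OF p tau]
    by (simp add: pos_less_divide_eq)
  then show ?thesis unfolding siq_chi_eq by (intro zorder_times_delay_factor) simp
qed

lemma siq_real_root_branch:
  "\<exists>\<delta>>0. \<exists>\<mu>::real \<Rightarrow> real.
      continuous_on {siq_qc r tau p - \<delta> <..< siq_qc r tau p + \<delta>} \<mu>
      \<and> \<mu> (siq_qc r tau p) = 0
      \<and> (\<forall>q. \<bar>q - siq_qc r tau p\<bar> < \<delta> \<longrightarrow>
            siq_chi r tau p q (complex_of_real (\<mu> q)) = 0
            \<and> (q < siq_qc r tau p \<longrightarrow> \<mu> q < 0)
            \<and> (q > siq_qc r tau p \<longrightarrow> \<mu> q > 0))"
proof -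
  define e qc where "e = siq_eps tau p" and "qc = siq_qc r tau p"
  define c where "c = siq_gain r tau p"
  have c_eq: "c = (\<lambda>q. 1 / (1 - e) + r * (q - qc))"
    using r by (simp add: fun_eq_iff c_def e_def qc_def siq_gain_eq)
  obtain \<eta> \<rho> where "0 < \<eta>" and \<rho>: "continuous_on {1 / (1 - e) - \<eta> <..< 1 / (1 - e) + \<eta>} \<rho>"
    "\<rho> (1 / (1 - e)) = 0"
    "\<And>c. \<bar>c - 1 / (1 - e)\<bar> < \<eta> \<Longrightarrow> delay_factor c e tau (of_real (\<rho> c)) = 0
        \<and> (\<rho> c < 0 \<longleftrightarrow> c < 1 / (1 - e)) \<and> (0 < \<rho> c \<longleftrightarrow> 1 / (1 - e) < c)"
    using delay_factor_real_root_branch[OF siq_eps_bounds(1,2)[OF p tau] less_imp_le[OF tau]]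
    unfolding e_def by blast
  have near: "\<bar>c q - 1 / (1 - e)\<bar> < \<eta> \<longleftrightarrow> \<bar>q - qc\<bar> < \<eta> / r" for q
  proof -
    have "\<bar>c q - 1 / (1 - e)\<bar> = r * \<bar>q - qc\<bar>" using r by (simp add: c_eq abs_mult)
    then show ?thesis using r by (simp add: pos_less_divide_eq mult.commute)
  qed
  show ?thesis unfolding qc_def[symmetric]
  proof (intro exI conjI allI impI)
    show "0 < \<eta> / r" using \<open>0 < \<eta>\<close> r by simp
    show "continuous_on {qc - \<eta> / r <..< qc + \<eta> / r} (\<lambda>q. \<rho> (c q))"
      unfolding c_eq by (rule continuous_on_affine_comp_interval[OF \<rho>(1) r])
    show "\<rho> (c qc) = 0" using \<rho>(2) by (simp add: c_eq)
    fix q assume "\<bar>q - qc\<bar> < \<eta> / r"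
    then have near_q: "\<bar>c q - 1 / (1 - e)\<bar> < \<eta>" using near[of q] by simp
    have \<rho>q: "delay_factor (c q) e tau (of_real (\<rho> (c q))) = 0
        \<and> (\<rho> (c q) < 0 \<longleftrightarrow> q < qc) \<and> (0 < \<rho> (c q) \<longleftrightarrow> qc < q)"
      using \<rho>(3)[OF near_q] unfolding c_def e_def qc_def siq_gain_critical_iff[OF r] .
    then show "siq_chi r tau p q (of_real (\<rho> (c q))) = 0" by (simp add: siq_chi_eq c_def e_def)
    show "\<rho> (c q) < 0" if "q < qc" using \<rho>q that by blast
    show "0 < \<rho> (c q)" if "qc < q" using \<rho>q that by blast
  qed
qed

end

theorem proposition8:
  fixes r tau p :: real
  assumes "r > 0" and "tau > 0" and "0 < p" and "p < 1"
  shows "(\<forall>q. q \<le> siq_qc r tau p \<longrightarrow> siq_lin_stable r tau p q)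
    \<and> (\<forall>q. q > siq_qc r tau p \<longrightarrow> siq_lin_unstable r tau p q)
    \<and> (\<forall>q. q < siq_qc r tau p \<longrightarrow>
          zorder (siq_chi r tau p q) 0 = 1
          \<and> (\<forall>z. siq_chi r tau p q z = 0 \<and> z \<noteq> 0 \<longrightarrow> Re z < 0))
    \<and> (\<exists>\<delta>>0. \<exists>\<mu>::real \<Rightarrow> real.
          continuous_on {siq_qc r tau p - \<delta> <..< siq_qc r tau p + \<delta>} \<mu>
          \<and> \<mu> (siq_qc r tau p) = 0
          \<and> (\<forall>q. \<bar>q - siq_qc r tau p\<bar> < \<delta> \<longrightarrow>
                siq_chi r tau p q (complex_of_real (\<mu> q)) = 0
                \<and> (q < siq_qc r tau p \<longrightarrow> \<mu> q < 0)
                \<and> (q > siq_qc r tau p \<longrightarrow> \<mu> q > 0)))"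
proof -
  have p: "0 \<le> p" "p \<le> 1" using assms(3,4) by simp_all
  note stable = siq_lin_stable_if_le_qc[OF assms(1,2) p]
  show ?thesis
  proof (intro conjI allI impI)
    fix q z
    show "siq_lin_stable r tau p q" if "q \<le> siq_qc r tau p" using stable[OF that] .
    show "siq_lin_unstable r tau p q" if "q > siq_qc r tau p"
      using siq_lin_unstable_if_gt_qc[OF assms(1,2) p that] .
    show "zorder (siq_chi r tau p q) 0 = 1" if "q < siq_qc r tau p"
      using zorder_siq_chi_if_lt_qc[OF assms(1,2) p that] .
    show "Re z < 0" if "q < siq_qc r tau p" and "siq_chi r tau p q z = 0 \<and> z \<noteq> 0"
      using stable[OF less_imp_le[OF that(1)]] that(2) unfolding siq_lin_stable_def by blast
  qed (rule siq_real_root_branch[OF assms(1,2) p])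
qed

end
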